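(* Let $A$ and $B$ be commutative torsion groups such that $B[p^\infty]=\{0\}$ for all but finitely many primes $p$. Identify $A=\bigoplus_p A[p^\infty]$ and $B=\bigoplus_p B[p^\infty]$ (sums over all primes), and regard $f_\bullet=(f_p)_p\in\bigoplus_p B[p^\infty]^{A[p^\infty]}$ as the map $(x_p)_p\mapsto(f_p(x_p))_p$. Then: (a) $\operatorname{fdeg}(f_\bullet)=\max_p\operatorname{fdeg}(f_p)$ for all such $f_\bullet$; (b) $\mathcal F_n(A,B)=\bigoplus_p\mathcal F_n(A[p^\infty],B[p^\infty])$ for all $n\in\mathbb N\cup\{-\infty\}$; (c) $\mathcal F(A,B)=\bigoplus_p\mathcal F(A[p^\infty],B[p^\infty])$.
   Context: For commutative groups $A,B$, $B^A$ denotes the commutative group (under pointwise addition) of all maps $A\to B$. For $a\in A$, the difference operator $\Delta_a:B^A\to B^A$ is $(\Delta_a f)(x)=f(x+a)-f(x)$. Let $\widetilde{\mathbb N}=\mathbb N\cup\{-\infty,\infty\}$ ($\mathbb N=\{0,1,2,\dots\}$), totally ordered with $-\infty$ least and $\infty$ greatest. The functional degree $\operatorname{fdeg}(f)\in\widetilde{\mathbb N}$ of $f\in B^A$ is: $-\infty$ if $f=0$; otherwise the least $n\in\mathbb N$ such that $\Delta_{a_1}\cdots\Delta_{a_{n+1}}f=0$ for all $a_1,\dots,a_{n+1}\in A$; and $\infty$ if no such $n$ exists. For $n\in\widetilde{\mathbb N}$, $\mathcal F_n(A,B)=\{f\in B^A:\operatorname{fdeg}(f)\le n\}$, and $\mathcal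 F(A,B)=\bigcup_{n<\infty}\mathcal F_n(A,B)$. For a prime $p$, $A[p^\infty]=\{x\in A:p^kx=0\text{ for some }k\ge1\}$. *)

theory Defs
  imports "HOL-Library.Extended_Real" "HOL-Computational_Algebra.Primes"
begin

primrec gmul :: "nat \<Rightarrow> 'a::ab_group_add \<Rightarrow> 'a" where
  "gmul 0 x = 0"
| "gmul (Suc n) x = x + gmul n x"

text \<open>The p-primary part A[p^\<infinity>] (as a subset of the ambient type).\<close>
definition ptors :: "nat \<Rightarrow> 'a::ab_group_add set" where
  "ptors p = {x. \<exists>k\<ge>1. gmul (p ^ k) x = 0}"

definition Delta :: "'a::ab_group_add \<Rightarrow> ('a \<Rightarrow> 'b::ab_group_add) \<Rightarrow> 'a \<Rightarrow> 'b" where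
  "Delta a f = (\<lambda>x. f (x + a) - f x)"

primrec iter_Delta :: "'a::ab_group_add list \<Rightarrow> ('a \<Rightarrow> 'b::ab_group_add) \<Rightarrow> 'a \<Rightarrow> 'b" where
  "iter_Delta [] f = f"
| "iter_Delta (a # as) f = Delta a (iter_Delta as f)"

text \<open>All (n+1)-fold differences with steps in S vanish on S (f viewed as a map S \<rightarrow> B).\<close>
definition diffs_vanish_on :: "'a::ab_group_add set \<Rightarrow> ('a \<Rightarrow> 'b::ab_group_add) \<Rightarrow> nat \<Rightarrow> bool" where
  "diffs_vanish_on S f n \<longleftrightarrow>
     (\<forall>as. length as = Suc n \<longrightarrow> set as \<subseteq> S \<longrightarrow> (\<forall>x\<in>S. iter_Delta as f x = 0))"

text \<open>Functional degree of f restricted to the subgroup S, valued in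
  N \<union> {-\<infinity>, \<infinity>} embedded in ereal.\<close>
definition fdeg_on :: "'a::ab_group_add set \<Rightarrow> ('a \<Rightarrow> 'b::ab_group_add) \<Rightarrow> ereal" where
  "fdeg_on S f =
     (if \<forall>x\<in>S. f x = 0 then -\<infinity>
      else if \<exists>n. diffs_vanish_on S f n then ereal (real (LEAST n. diffs_vanish_on S f n))
      else \<infinity>)"

abbreviation fdeg :: "('a::ab_group_add \<Rightarrow> 'b::ab_group_add) \<Rightarrow> ereal" where
  "fdeg f \<equiv> fdeg_on UNIV f"

text \<open>Primary decomposition x = \<Sum>_p x_p (identification A = \<Oplus>_p A[p^\<infinity>]).\<close>
definition is_prim_decomp :: "'a::ab_group_add \<Rightarrow> (nat \<Rightarrow> 'a) \<Rightarrow> bool" where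
  "is_prim_decomp x c \<longleftrightarrow>
     (\<forall>p. c p \<in> ptors p) \<and> (\<forall>p. \<not> prime p \<longrightarrow> c p = 0) \<and>
     finite {p. c p \<noteq> 0} \<and> x = (\<Sum>p\<in>{p. c p \<noteq> 0}. c p)"

definition pcomp :: "'a::ab_group_add \<Rightarrow> nat \<Rightarrow> 'a" where
  "pcomp x = (THE c. is_prim_decomp x c)"

text \<open>An element (f_p)_p of \<Oplus>_p B[p^\<infinity>]^{A[p^\<infinity>]}: each f_p maps A[p^\<infinity>] into B[p^\<infinity>]
  (values outside A[p^\<infinity>] are irrelevant), and only finitely many f_p are nonzero.\<close>
definition prim_family :: "(nat \<Rightarrow> 'a::ab_group_add \<Rightarrow> 'b::ab_group_add) \<Rightarrow> bool" where
  "prim_family f \<longleftrightarrow>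
     (\<forall>p. prime p \<longrightarrow> (\<forall>x\<in>ptors p. f p x \<in> ptors p)) \<and>
     finite {p. prime p \<and> \<not> (\<forall>x\<in>ptors p. f p x = 0)}"

text \<open>The map (x_p)_p \<mapsto> (f_p(x_p))_p, read back in B = \<Oplus>_p B[p^\<infinity>].\<close>
definition glue :: "(nat \<Rightarrow> 'a::ab_group_add \<Rightarrow> 'b::ab_group_add) \<Rightarrow> 'a \<Rightarrow> 'b" where
  "glue f x = (\<Sum>p\<in>{p. prime p \<and> f p (pcomp x p) \<noteq> 0}. f p (pcomp x p))"

end

theory Submission
  imports Defs
begin

text \<open>A torsion group is the direct sum of its primary parts, \<open>pcomp x p\<close> being the
  \<open>p\<close>-component of \<open>x\<close>. The \<open>p\<close>-component of \<open>glue f\<close> is \<open>f p\<close> composed with the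
  retraction \<open>pcomp _ p\<close> of \<open>A\<close> onto \<open>A[p\<^sup>\<infinity>]\<close>, so the iterated differences of
  \<open>glue f\<close> vanish exactly when those of every \<open>f p\<close> do; this gives (a) and one inclusion of
  (b) and (c). Conversely, let \<open>g\<close> have finite degree and \<open>h\<close> be its \<open>p\<close>-component. For
  \<open>a\<close> of \<open>q\<close>-power order with \<open>q \<noteq> p\<close>, some power \<open>\<Delta>\<^sub>a\<^sup>n h\<close> vanishes, and
  \<open>\<Delta>\<^sub>a\<^sup>2 \<psi> = 0\<close> forces \<open>\<psi>(y + t a) = \<psi> y + t \<Delta>\<^sub>a\<psi>(y)\<close>, so \<open>\<Delta>\<^sub>a\<psi>(y)\<close> is
  killed both by the order of \<open>a\<close> and by a power of \<open>p\<close>; descending in \<open>n\<close> gives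
  \<open>\<Delta>\<^sub>a h = 0\<close>. Hence \<open>h\<close> factors through \<open>A[p\<^sup>\<infinity>]\<close>, and \<open>g\<close> is glued from its
  components, a finitely supported family because only finitely many \<open>B[p\<^sup>\<infinity>]\<close> are nonzero.\<close>

section \<open>Multiples and primary parts\<close>

lemma gmul_add: "gmul (m + n) x = gmul m x + gmul n x"
  by (induction m) (simp_all add: add.assoc)

lemma gmul_zero_right [simp]: "gmul n 0 = 0"
  by (induction n) simp_all

lemma gmul_plus: "gmul n (x + y) = gmul n x + gmul n y"
  by (induction n) (simp_all add: algebra_simps)

lemma gmul_mult: "gmul (m * n) x = gmul m (gmul n x)"
  by (induction m) (simp_all add: gmul_add gmul_plus)

lemma gmul_uminus: "gmul n (- x) = - gmul n x"
  by (induction n) simp_all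

lemma gmul_eq_0_dvd: "gmul a x = 0 \<Longrightarrow> a dvd b \<Longrightarrow> gmul b x = 0"
  by (auto simp: dvd_def gmul_mult mult.commute[of a])

lemma gmul_coprime_eq_0:
  assumes "gmul a x = 0" "gmul b x = 0" "coprime a b"
  shows "x = 0"
proof (cases "a = 0")
  case True
  then show ?thesis using assms by simp
next
  case False
  with bezout_nat[OF False, of b] assms(3) obtain u v where uv: "a * u = b * v + 1" by auto
  have "gmul (a * u) x = 0" "gmul (b * v) x = 0" using assms(1,2) by (simp_all add: gmul_eq_0_dvd)
  then show ?thesis using uv by (simp add: gmul_add)
qed

lemma gmul_coprime_split:
  assumes "gmul (a * b) x = 0" "coprime a b"
  obtains y z where "x = y + z" "gmul a y = 0" "gmul b z = 0"
proof (cases "a = 0")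
  case True
  then show ?thesis using assms(2) that[of x 0] by simp
next
  case False
  with bezout_nat[OF False, of b] assms(2) obtain u v where uv: "a * u = b * v + 1" by auto
  have "gmul (a * u) x = gmul (b * v) x + x" by (simp add: uv gmul_add)
  moreover have "gmul a (gmul (b * v) x) = 0" "gmul b (gmul (a * u) x) = 0"
    using gmul_eq_0_dvd[OF assms(1)] by (simp_all add: gmul_mult[symmetric])
  ultimately show ?thesis
    by (intro that[of "- gmul (b * v) x" "gmul (a * u) x"]) (simp_all add: gmul_uminus)
qed

lemma ptors_zero [simp]: "0 \<in> ptors p"
  unfolding ptors_def by (intro CollectI exI[of _ 1]) simp

lemma ptors_add: assumes "x \<in> ptors p" "y \<in> ptors p" shows "x + y \<in> ptors p"
proof -
  obtain k l where k: "k \<ge> 1" "gmul (p ^ k) x = 0" and l: "gmul (p ^ l) y = 0"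
    using assms unfolding ptors_def by auto
  have "gmul (p ^ (k + l)) x = 0"
    by (rule gmul_eq_0_dvd[OF k(2)]) (simp add: power_add)
  moreover have "gmul (p ^ (k + l)) y = 0"
    by (rule gmul_eq_0_dvd[OF l]) (simp add: power_add)
  ultimately show ?thesis unfolding ptors_def using k(1)
    by (auto simp: gmul_plus intro!: exI[of _ "k + l"])
qed

lemma ptors_uminus: "x \<in> ptors p \<Longrightarrow> - x \<in> ptors p"
  unfolding ptors_def by (auto simp: gmul_uminus)

lemma ptors_diff: "x \<in> ptors p \<Longrightarrow> y \<in> ptors p \<Longrightarrow> x - y \<in> ptors p"
  using ptors_add[OF _ ptors_uminus, of x p y] by simp

lemma sum_ptors_other_primes_killed:
  fixes e :: "nat \<Rightarrow> 'a::ab_group_add"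
  assumes "finite S" "\<forall>p\<in>S. prime p \<and> p \<noteq> q \<and> e p \<in> ptors p" "prime q"
  shows "\<exists>N. coprime N q \<and> gmul N (sum e S) = 0"
  using assms
proof (induction S rule: finite_induct)
  case empty
  then show ?case by (intro exI[of _ 1]) simp
next
  case (insert p S)
  then obtain N where N: "coprime N q" "gmul N (sum e S) = 0" by auto
  from insert obtain k where k: "gmul (p ^ k) (e p) = 0" unfolding ptors_def by auto
  have "coprime p q" using insert.prems by (simp add: primes_coprime)
  then have "coprime (p ^ k * N) q" using N(1) by simp
  moreover have "gmul (p ^ k * N) (sum e (insert p S)) = 0"
    using insert(1,2) gmul_eq_0_dvd[OF N(2)] gmul_eq_0_dvd[OF k] by (simp add: gmul_plus)
  ultimately show ?case by blast
qed

lemma sum_primary_eq_0_imp: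
  fixes e :: "nat \<Rightarrow> 'a::ab_group_add"
  assumes "finite S" "\<forall>p\<in>S. prime p \<and> e p \<in> ptors p" "sum e S = 0" "q \<in> S"
  shows "e q = 0"
proof -
  have q: "prime q" "e q \<in> ptors q" using assms by auto
  obtain N where N: "coprime N q" "gmul N (sum e (S - {q})) = 0"
    using sum_ptors_other_primes_killed[of "S - {q}" q e] assms q by auto
  have "e q = - sum e (S - {q})" using assms(3) sum.remove[OF assms(1,4), of e]
    by (simp add: eq_neg_iff_add_eq_0)
  then have "gmul N (e q) = 0" using N(2) by (simp add: gmul_uminus)
  moreover obtain k where "gmul (q ^ k) (e q) = 0" using q unfolding ptors_def by auto
  ultimately show ?thesis using N(1) gmul_coprime_eq_0 by (metis coprime_power_right_iff)
qed

section \<open>Primary decomposition\<close>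

lemma is_prim_decompI:
  assumes "\<forall>p. c p \<in> ptors p" "\<forall>p. \<not> prime p \<longrightarrow> c p = 0" "finite S"
    "{p. c p \<noteq> 0} \<subseteq> S" "x = sum c S"
  shows "is_prim_decomp x c"
proof -
  have "finite {p. c p \<noteq> 0}" using assms(3,4) finite_subset by blast
  moreover have "sum c S = sum c {p. c p \<noteq> 0}"
    using assms(3,4) by (intro sum.mono_neutral_right) auto
  ultimately show ?thesis using assms unfolding is_prim_decomp_def by simp
qed

lemma is_prim_decomp_sum:
  assumes "is_prim_decomp x c" "finite S" "{p. c p \<noteq> 0} \<subseteq> S"
  shows "x = sum c S"
proof -
  have "sum c S = sum c {p. c p \<noteq> 0}"
    using assms(2,3) by (intro sum.mono_neutral_right) auto
  then show ?thesis using assms(1) unfolding is_prim_decomp_def by simp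
qed

lemma is_prim_decomp_unique:
  assumes "is_prim_decomp x c" "is_prim_decomp x d"
  shows "c = d"
proof
  fix q
  define S where "S = {p. c p \<noteq> 0} \<union> {p. d p \<noteq> 0}"
  have S: "finite S" using assms unfolding is_prim_decomp_def S_def by simp
  have "x = sum c S" "x = sum d S"
    using is_prim_decomp_sum[OF assms(1) S] is_prim_decomp_sum[OF assms(2) S] unfolding S_def by auto
  then have "sum (\<lambda>p. c p - d p) S = 0" by (simp add: sum_subtractf)
  moreover have "\<forall>p\<in>S. prime p \<and> c p - d p \<in> ptors p"
    using assms unfolding is_prim_decomp_def S_def by (auto intro: ptors_diff)
  ultimately show "c q = d q"
    using sum_primary_eq_0_imp[OF S, of "\<lambda>p. c p - d p" q] by (cases "q \<in> S") (auto simp: S_def)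
qed

lemma is_prim_decomp_add_primary:
  assumes c: "is_prim_decomp y c" and p: "prime p" "z \<in> ptors p"
  shows "is_prim_decomp (y + z) (c(p := c p + z))"
proof -
  define S where "S = insert p {q. c q \<noteq> 0}"
  have S: "finite S" "p \<in> S" using c unfolding is_prim_decomp_def S_def by simp_all
  show ?thesis
  proof (rule is_prim_decompI[OF _ _ S(1)])
    show "\<forall>q. (c(p := c p + z)) q \<in> ptors q" "\<forall>q. \<not> prime q \<longrightarrow> (c(p := c p + z)) q = 0"
      using c p unfolding is_prim_decomp_def by (auto intro: ptors_add)
    show "{q. (c(p := c p + z)) q \<noteq> 0} \<subseteq> S" unfolding S_def by auto
    have "sum (c(p := c p + z)) S = sum c S + z"
      using S by (simp add: sum.remove algebra_simps)
    then show "y + z = sum (c(p := c p + z)) S"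
      using is_prim_decomp_sum[OF c S(1)] unfolding S_def by auto
  qed
qed

lemma is_prim_decomp_exists:
  fixes x :: "'a::ab_group_add"
  assumes "n > 0" "gmul n x = 0"
  shows "\<exists>c. is_prim_decomp x c"
  using assms
proof (induction n arbitrary: x rule: less_induct)
  case (less n)
  show ?case
  proof (cases "n = 1")
    case True
    then have "x = 0" using less.prems by simp
    then show ?thesis by (auto intro!: exI[of _ "\<lambda>_. 0"] is_prim_decompI[where S="{}"])
  next
    case False
    then obtain p where p: "prime p" "p dvd n" using less.prems(1) prime_factor_nat by blast
    define k where "k = multiplicity p n"
    obtain m where nm: "n = p ^ k * m" and "\<not> p dvd m"
      using multiplicity_decompose'[of n p] less.prems(1) p(1) unfolding k_def
      by (metis not_prime_unit neq0_conv)
    then have "coprime m (p ^ k)"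
      using p(1) prime_imp_coprime coprime_commute coprime_power_right_iff by metis
    moreover have "gmul (m * p ^ k) x = 0" using less.prems(2) nm by (simp add: mult.commute)
    ultimately obtain y z where yz: "x = y + z" "gmul m y = 0" "gmul (p ^ k) z = 0"
      using gmul_coprime_split by metis
    have "k \<ge> 1" unfolding k_def using p less.prems(1)
      by (simp add: Suc_le_eq prime_multiplicity_gt_zero_iff)
    then have "z \<in> ptors p" using yz(3) unfolding ptors_def by auto
    have "1 < p ^ k" using \<open>k \<ge> 1\<close> prime_gt_1_nat[OF p(1)] by (intro one_less_power) auto
    then have "0 < m \<and> m < n" using nm less.prems(1) by (simp add: nat_0_less_mult_iff)
    then obtain c where "is_prim_decomp y c" using less.IH yz(2) by blast
    then show ?thesis using is_prim_decomp_add_primary[OF _ p(1) \<open>z \<in> ptors p\<close>] yz(1) by blast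
  qed
qed

definition torsion :: "'a::ab_group_add itself \<Rightarrow> bool" where
  "torsion _ \<longleftrightarrow> (\<forall>x::'a. \<exists>n>0. gmul n x = 0)"

context
  assumes torsion: "torsion TYPE('a::ab_group_add)"
begin

lemma pcomp_is_prim_decomp: "is_prim_decomp x (pcomp (x::'a))"
proof -
  obtain n where "n > 0" "gmul n x = 0" using torsion unfolding torsion_def by blast
  then obtain c where c: "is_prim_decomp x c" using is_prim_decomp_exists by blast
  show ?thesis unfolding pcomp_def
    by (rule theI[of _ c]) (use c is_prim_decomp_unique in auto)
qed

lemma pcomp_eqI: "is_prim_decomp (x::'a) c \<Longrightarrow> pcomp x = c"
  using is_prim_decomp_unique[OF pcomp_is_prim_decomp] .

lemma pcomp_in_ptors: "pcomp (x::'a) p \<in> ptors p"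
  using pcomp_is_prim_decomp[of x] unfolding is_prim_decomp_def by blast

lemma pcomp_nonprime: "\<not> prime p \<Longrightarrow> pcomp (x::'a) p = 0"
  using pcomp_is_prim_decomp[of x] unfolding is_prim_decomp_def by blast

lemma finite_pcomp_nonzero: "finite {p. pcomp (x::'a) p \<noteq> 0}"
  using pcomp_is_prim_decomp[of x] unfolding is_prim_decomp_def by blast

lemma sum_pcomp: "finite S \<Longrightarrow> {p. pcomp (x::'a) p \<noteq> 0} \<subseteq> S \<Longrightarrow> x = sum (pcomp x) S"
  using is_prim_decomp_sum[OF pcomp_is_prim_decomp] .

lemma pcomp_add: "pcomp (x + y :: 'a) p = pcomp x p + pcomp y p"
proof -
  define S where "S = {p. pcomp x p \<noteq> 0} \<union> {p. pcomp y p \<noteq> 0}"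
  have S: "finite S" unfolding S_def using finite_pcomp_nonzero by simp
  have "is_prim_decomp (x + y) (\<lambda>p. pcomp x p + pcomp y p)"
  proof (rule is_prim_decompI[OF _ _ S])
    show "\<forall>p. pcomp x p + pcomp y p \<in> ptors p" by (auto intro: ptors_add pcomp_in_ptors)
    show "\<forall>p. \<not> prime p \<longrightarrow> pcomp x p + pcomp y p = 0" by (simp add: pcomp_nonprime)
    show "{p. pcomp x p + pcomp y p \<noteq> 0} \<subseteq> S" unfolding S_def by auto
    show "x + y = (\<Sum>p\<in>S. pcomp x p + pcomp y p)"
      using sum_pcomp[OF S, of x] sum_pcomp[OF S, of y] unfolding S_def by (simp add: sum.distrib)
  qed
  then show ?thesis using pcomp_eqI by metis
qed

lemma pcomp_zero: "pcomp (0::'a) p = 0"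
  using pcomp_add[of 0 0 p] by simp

lemma pcomp_diff: "pcomp (x - y :: 'a) p = pcomp x p - pcomp y p"
  using pcomp_add[of "x - y" y p] by (simp add: eq_diff_eq)

lemma pcomp_of_ptors:
  assumes "prime p" "(y::'a) \<in> ptors p"
  shows "pcomp y p = y"
proof -
  have "is_prim_decomp y (\<lambda>q. if q = p then y else 0)"
    by (rule is_prim_decompI[where S="{p}"]) (use assms in auto)
  then show ?thesis by (simp add: pcomp_eqI)
qed

lemma pcomp_eq_iff: "(x::'a) = y \<longleftrightarrow> (\<forall>p. prime p \<longrightarrow> pcomp x p = pcomp y p)"
proof
  assume "\<forall>p. prime p \<longrightarrow> pcomp x p = pcomp y p"
  then have "pcomp (x - y) p = 0" for p by (cases "prime p") (simp_all add: pcomp_diff pcomp_nonprime)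
  then have "x - y = 0" using sum_pcomp[of "{}" "x - y"] by simp
  then show "x = y" by simp
qed simp

end

section \<open>Vanishing differences and the functional degree\<close>

definition diffs_vanish :: "'a::ab_group_add set \<Rightarrow> ('a \<Rightarrow> 'b::ab_group_add) \<Rightarrow> nat \<Rightarrow> bool" where
  "diffs_vanish S f m \<longleftrightarrow>
     (\<forall>as. length as = m \<longrightarrow> set as \<subseteq> S \<longrightarrow> (\<forall>x\<in>S. iter_Delta as f x = 0))"

definition add_closed :: "'a::ab_group_add set \<Rightarrow> bool" where
  "add_closed S \<longleftrightarrow> (\<forall>x\<in>S. \<forall>a\<in>S. x + a \<in> S)"

lemma add_closed_UNIV: "add_closed UNIV"
  unfolding add_closed_def by simp

lemma add_closed_ptors: "add_closed (ptors p)"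
  unfolding add_closed_def by (auto intro: ptors_add)

lemma diffs_vanish_on_iff: "diffs_vanish_on S f n \<longleftrightarrow> diffs_vanish S f (Suc n)"
  unfolding diffs_vanish_on_def diffs_vanish_def by simp

lemma diffs_vanish_0: "diffs_vanish S f 0 \<longleftrightarrow> (\<forall>x\<in>S. f x = 0)"
  unfolding diffs_vanish_def by simp

lemma diffs_vanish_Suc:
  assumes "add_closed S" "diffs_vanish S f m"
  shows "diffs_vanish S f (Suc m)"
  unfolding diffs_vanish_def
proof (intro allI impI ballI)
  fix as x assume "length as = Suc m" "set as \<subseteq> S" "x \<in> S"
  moreover obtain a bs where "as = a # bs" using \<open>length as = Suc m\<close> by (cases as) auto
  moreover have "x + a \<in> S" using assms(1) calculation unfolding add_closed_def by simp
  ultimately show "iter_Delta as f x = 0" using assms(2) unfolding diffs_vanish_def by (simp add: Delta_def)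
qed

lemma diffs_vanish_mono:
  assumes "add_closed S" "diffs_vanish S f a" "a \<le> b"
  shows "diffs_vanish S f b"
  using assms(3) by (induction b rule: dec_induct) (auto intro: diffs_vanish_Suc assms)

lemma diffs_vanish_uniform:
  assumes "finite F" "\<And>i. i \<in> F \<Longrightarrow> add_closed (U i)" "\<forall>i\<in>F. \<exists>m. diffs_vanish (U i) (g i) m"
  shows "\<exists>M. \<forall>i\<in>F. diffs_vanish (U i) (g i) M"
  using assms
proof (induction F rule: finite_induct)
  case (insert j F)
  then obtain M m where "\<forall>i\<in>F. diffs_vanish (U i) (g i) M" "diffs_vanish (U j) (g j) m" by auto
  then have "\<forall>i\<in>insert j F. diffs_vanish (U i) (g i) (max M m)"
    using insert.prems(1) by (auto intro: diffs_vanish_mono)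
  then show ?case by blast
qed simp

lemma fdeg_on_eq_MInfty_iff: "fdeg_on S f = -\<infinity> \<longleftrightarrow> diffs_vanish S f 0"
  unfolding fdeg_on_def diffs_vanish_0 by auto

lemma fdeg_on_less_PInfty_iff: "fdeg_on S f < \<infinity> \<longleftrightarrow> (\<exists>m. diffs_vanish S f m)"
proof -
  have "(\<exists>m. diffs_vanish S f m) \<longleftrightarrow> diffs_vanish S f 0 \<or> (\<exists>n. diffs_vanish S f (Suc n))"
    by (metis not0_implies_Suc)
  then show ?thesis unfolding fdeg_on_def diffs_vanish_0[symmetric] diffs_vanish_on_iff by auto
qed

lemma fdeg_on_le_ereal_iff:
  assumes S: "add_closed S"
  shows "fdeg_on S f \<le> ereal r \<longleftrightarrow>
    (if 0 \<le> r then diffs_vanish S f (Suc (nat \<lfloor>r\<rfloor>)) else diffs_vanish S f 0)"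
proof (cases "diffs_vanish S f 0")
  case True
  then show ?thesis using diffs_vanish_mono[OF S True] unfolding fdeg_on_def diffs_vanish_0 by simp
next
  case nonzero: False
  show ?thesis
  proof (cases "\<exists>n. diffs_vanish S f (Suc n)")
    case True
    define L where "L = (LEAST n. diffs_vanish S f (Suc n))"
    have "diffs_vanish S f (Suc L)" unfolding L_def using True by (rule LeastI_ex)
    then have "L \<le> K \<longleftrightarrow> diffs_vanish S f (Suc K)" for K
      using diffs_vanish_mono[OF S, of f "Suc L" "Suc K"] Least_le[of "\<lambda>n. diffs_vanish S f (Suc n)" K]
      unfolding L_def by auto
    moreover have "fdeg_on S f = ereal (real L)" using nonzero True
      unfolding fdeg_on_def diffs_vanish_0[symmetric] diffs_vanish_on_iff L_def by simp
    moreover have "real L \<le> r \<longleftrightarrow> 0 \<le> r \<and> L \<le> nat \<lfloor>r\<rfloor>" by linarith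
    ultimately show ?thesis using nonzero by auto
  next
    case False
    then show ?thesis using nonzero
      unfolding fdeg_on_def diffs_vanish_0[symmetric] diffs_vanish_on_iff by simp
  qed
qed

lemma fdeg_on_le_iff_of_diffs_vanish_iff:
  assumes "add_closed S" "\<And>i. i \<in> I \<Longrightarrow> add_closed (U i)"
    and "\<And>m. diffs_vanish S f m \<longleftrightarrow> (\<forall>i\<in>I. diffs_vanish (U i) (g i) m)"
  shows "fdeg_on S f \<le> e \<longleftrightarrow> (\<forall>i\<in>I. fdeg_on (U i) (g i) \<le> e)"
  using assms by (cases e) (simp_all add: fdeg_on_le_ereal_iff fdeg_on_eq_MInfty_iff)

lemma fdeg_on_less_PInfty_iff_of_diffs_vanish_iff:
  assumes "\<And>i. i \<in> I \<Longrightarrow> add_closed (U i)"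
    and "\<And>m. diffs_vanish S f m \<longleftrightarrow> (\<forall>i\<in>I. diffs_vanish (U i) (g i) m)"
    and "finite {i\<in>I. \<not> diffs_vanish (U i) (g i) 0}"
  shows "fdeg_on S f < \<infinity> \<longleftrightarrow> (\<forall>i\<in>I. fdeg_on (U i) (g i) < \<infinity>)"
proof -
  have "\<exists>M. \<forall>i\<in>I. diffs_vanish (U i) (g i) M"
    if finite_orders: "\<forall>i\<in>I. \<exists>m. diffs_vanish (U i) (g i) m"
  proof -
    obtain M where "\<forall>i\<in>{i\<in>I. \<not> diffs_vanish (U i) (g i) 0}. diffs_vanish (U i) (g i) M"
      using diffs_vanish_uniform[OF assms(3), of U g] assms(1) finite_orders by auto
    then show ?thesis using diffs_vanish_mono[of _ _ 0 M] assms(1) by blast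
  qed
  then show ?thesis unfolding fdeg_on_less_PInfty_iff assms(2) by blast
qed

section \<open>Gluing primary components\<close>

lemma iter_Delta_comp_left:
  assumes "\<And>x y. \<phi> (x - y) = \<phi> x - \<phi> y"
  shows "iter_Delta as (\<lambda>x. \<phi> (g x)) x = \<phi> (iter_Delta as g x)"
  by (induction as arbitrary: x) (simp_all add: Delta_def assms)

lemma iter_Delta_comp_right:
  assumes "\<And>x y. \<pi> (x + y) = \<pi> x + \<pi> y"
  shows "iter_Delta as (\<lambda>x. f (\<pi> x)) x = iter_Delta (map \<pi> as) f (\<pi> x)"
  by (induction as arbitrary: x) (simp_all add: Delta_def assms)

lemma diffs_vanish_comp_retraction:
  assumes hom: "\<And>x y. \<pi> (x + y) = \<pi> x + \<pi> y"
    and into: "\<And>x. \<pi> x \<in> S" and retract: "\<And>x. x \<in> S \<Longrightarrow> \<pi> x = x"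
  shows "diffs_vanish UNIV (\<lambda>x. f (\<pi> x)) m \<longleftrightarrow> diffs_vanish S f m"
proof
  assume vanish: "diffs_vanish UNIV (\<lambda>x. f (\<pi> x)) m"
  show "diffs_vanish S f m" unfolding diffs_vanish_def
  proof (intro allI impI ballI)
    fix as x assume "length as = m" "set as \<subseteq> S" "x \<in> S"
    moreover from this have "map \<pi> as = as" "\<pi> x = x" by (auto intro: map_idI retract)
    ultimately show "iter_Delta as f x = 0"
      using vanish iter_Delta_comp_right[OF hom, of as f x] unfolding diffs_vanish_def by auto
  qed
next
  assume vanish: "diffs_vanish S f m"
  show "diffs_vanish UNIV (\<lambda>x. f (\<pi> x)) m" unfolding diffs_vanish_def
  proof (intro allI impI ballI)
    fix as :: "'a list" and x :: 'a assume "length as = m"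
    moreover have "set (map \<pi> as) \<subseteq> S" using into by auto
    ultimately show "iter_Delta as (\<lambda>x. f (\<pi> x)) x = 0"
      using vanish into unfolding diffs_vanish_def iter_Delta_comp_right[OF hom] by simp
  qed
qed

lemma diffs_vanish_iff_pcomp:
  assumes "torsion TYPE('b::ab_group_add)"
  shows "diffs_vanish S (g :: 'a::ab_group_add \<Rightarrow> 'b) m
    \<longleftrightarrow> (\<forall>p. prime p \<longrightarrow> diffs_vanish S (\<lambda>x. pcomp (g x) p) m)"
proof -
  have zero_iff: "y = 0 \<longleftrightarrow> (\<forall>p. prime p \<longrightarrow> pcomp y p = 0)" for y :: 'b
    by (metis pcomp_eq_iff[OF assms] pcomp_zero[OF assms])
  have "iter_Delta as (\<lambda>x. pcomp (g x) p) x = pcomp (iter_Delta as g x) p" for as x p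
    by (rule iter_Delta_comp_left) (rule pcomp_diff[OF assms])
  then show ?thesis unfolding diffs_vanish_def zero_iff[of "iter_Delta _ g _"] by auto
qed

lemma pcomp_glue:
  assumes TA: "torsion TYPE('a::ab_group_add)" and TB: "torsion TYPE('b::ab_group_add)"
    and f: "prim_family (f :: nat \<Rightarrow> 'a \<Rightarrow> 'b)" and p: "prime p"
  shows "pcomp (glue f x) p = f p (pcomp x p)"
proof -
  define c where "c q = (if prime q then f q (pcomp x q) else 0)" for q
  let ?S = "{q. prime q \<and> \<not> (\<forall>y\<in>ptors q. f q y = 0)}"
  have S: "finite ?S" using f unfolding prim_family_def by simp
  have nonzero: "{q. c q \<noteq> 0} = {q. prime q \<and> f q (pcomp x q) \<noteq> 0}" unfolding c_def by auto
  moreover have "{q. prime q \<and> f q (pcomp x q) \<noteq> 0} \<subseteq> ?S"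
    using pcomp_in_ptors[OF TA] by auto
  ultimately have sub: "{q. c q \<noteq> 0} \<subseteq> ?S" by simp
  have "is_prim_decomp (glue f x) c"
  proof (rule is_prim_decompI[OF _ _ S sub])
    show "\<forall>q. c q \<in> ptors q"
      using f pcomp_in_ptors[OF TA] unfolding prim_family_def c_def by simp
    show "glue f x = sum c ?S"
      unfolding glue_def nonzero[symmetric] using S sub
      by (intro sum.mono_neutral_cong_left) (auto simp: c_def)
  qed (simp add: c_def)
  then show ?thesis using pcomp_eqI[OF TB] p unfolding c_def by auto
qed

lemma diffs_vanish_glue_iff:
  assumes TA: "torsion TYPE('a::ab_group_add)" and TB: "torsion TYPE('b::ab_group_add)"
    and f: "prim_family (f :: nat \<Rightarrow> 'a \<Rightarrow> 'b)"
  shows "diffs_vanish UNIV (glue f) m \<longleftrightarrow> (\<forall>p\<in>{p. prime p}. diffs_vanish (ptors p) (f p) m)"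
proof -
  have "diffs_vanish UNIV (\<lambda>x. pcomp (glue f x) p) m \<longleftrightarrow> diffs_vanish (ptors p) (f p) m"
    if "prime p" for p
    unfolding pcomp_glue[OF TA TB f \<open>prime p\<close>]
    by (rule diffs_vanish_comp_retraction)
      (simp_all add: pcomp_add[OF TA] pcomp_in_ptors[OF TA] pcomp_of_ptors[OF TA \<open>prime p\<close>])
  then show ?thesis using diffs_vanish_iff_pcomp[OF TB, of UNIV "glue f" m] by simp
qed

lemma fdeg_glue_le_iff:
  assumes "torsion TYPE('a::ab_group_add)" "torsion TYPE('b::ab_group_add)"
    and "prim_family (f :: nat \<Rightarrow> 'a \<Rightarrow> 'b)"
  shows "fdeg (glue f) \<le> e \<longleftrightarrow> (\<forall>p. prime p \<longrightarrow> fdeg_on (ptors p) (f p) \<le> e)"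
  using fdeg_on_le_iff_of_diffs_vanish_iff[OF add_closed_UNIV add_closed_ptors diffs_vanish_glue_iff[OF assms]]
  by simp

lemma fdeg_glue_less_PInfty_iff:
  assumes "torsion TYPE('a::ab_group_add)" "torsion TYPE('b::ab_group_add)"
    and f: "prim_family (f :: nat \<Rightarrow> 'a \<Rightarrow> 'b)"
  shows "fdeg (glue f) < \<infinity> \<longleftrightarrow> (\<forall>p. prime p \<longrightarrow> fdeg_on (ptors p) (f p) < \<infinity>)"
proof -
  have "finite {p\<in>{p. prime p}. \<not> diffs_vanish (ptors p) (f p) 0}"
    using f unfolding prim_family_def diffs_vanish_0 by simp
  then show ?thesis
    using fdeg_on_less_PInfty_iff_of_diffs_vanish_iff[OF add_closed_ptors diffs_vanish_glue_iff[OF assms]]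
    by simp
qed

lemma fdeg_glue:
  assumes "torsion TYPE('a::ab_group_add)" "torsion TYPE('b::ab_group_add)"
    and "prim_family (f :: nat \<Rightarrow> 'a \<Rightarrow> 'b)"
  shows "fdeg (glue f) = (SUP p\<in>{p. prime p}. fdeg_on (ptors p) (f p))"
proof -
  have "fdeg (glue f) \<le> e \<longleftrightarrow> (SUP p\<in>{p. prime p}. fdeg_on (ptors p) (f p)) \<le> e" for e
    unfolding fdeg_glue_le_iff[OF assms] SUP_le_iff by simp
  then show ?thesis by (meson order.antisym order.refl)
qed

section \<open>Maps of finite degree\<close>

lemma iter_Delta_append: "iter_Delta (as @ bs) f = iter_Delta as (iter_Delta bs f)"
  by (induction as) simp_all

lemma Delta_eq_0_of_Delta_Delta_eq_0:
  fixes \<psi> :: "'a::ab_group_add \<Rightarrow> 'b::ab_group_add"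
  assumes Delta_ptors: "\<forall>y. Delta a \<psi> y \<in> ptors p" and second: "Delta a (Delta a \<psi>) = (\<lambda>_. 0)"
    and a: "a \<in> ptors q" and pq: "prime p" "prime q" "p \<noteq> q"
  shows "Delta a \<psi> = (\<lambda>_. 0)"
proof
  fix y
  define c where "c = Delta a \<psi>"
  have c_periodic: "c (y + gmul t a) = c y" for t
  proof (induction t)
    case (Suc t)
    have "c (y + gmul (Suc t) a) = c (y + gmul t a + a)" by (simp add: algebra_simps)
    also have "\<dots> = c (y + gmul t a)"
      using fun_cong[OF second, of "y + gmul t a"] unfolding c_def Delta_def[of a "Delta a \<psi>"] by simp
    finally show ?case using Suc by simp
  qed simp
  have \<psi>_affine: "\<psi> (y + gmul t a) = \<psi> y + gmul t (c y)" for t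
  proof (induction t)
    case (Suc t)
    have "\<psi> (y + gmul (Suc t) a) = \<psi> (y + gmul t a + a)" by (simp add: algebra_simps)
    also have "\<dots> = \<psi> (y + gmul t a) + c (y + gmul t a)" unfolding c_def Delta_def by simp
    finally show ?case using Suc c_periodic[of t] by (simp add: algebra_simps)
  qed simp
  obtain k where "gmul (q ^ k) a = 0" using a unfolding ptors_def by auto
  then have "gmul (q ^ k) (c y) = 0" using \<psi>_affine[of "q ^ k"] by simp
  moreover obtain l where "gmul (p ^ l) (c y) = 0" using Delta_ptors unfolding c_def ptors_def by blast
  moreover have "coprime (p ^ l) (q ^ k)" using pq by (simp add: primes_coprime)
  ultimately show "Delta a \<psi> y = 0" unfolding c_def by (metis gmul_coprime_eq_0)
qed

lemma Delta_eq_0_of_iter_Delta_eq_0: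
  fixes h :: "'a::ab_group_add \<Rightarrow> 'b::ab_group_add"
  assumes "\<forall>y. h y \<in> ptors p" "iter_Delta (replicate n a) h = (\<lambda>_. 0)"
    and "a \<in> ptors q" "prime p" "prime q" "p \<noteq> q"
  shows "Delta a h = (\<lambda>_. 0)"
  using assms(1,2)
proof (induction n arbitrary: h)
  case 0
  then show ?case by (simp add: Delta_def)
next
  case (Suc n)
  have Delta_ptors: "\<forall>y. Delta a h y \<in> ptors p" using Suc.prems(1) by (simp add: Delta_def ptors_diff)
  moreover have "iter_Delta (replicate n a) (Delta a h) = (\<lambda>_. 0)"
    using Suc.prems(2) iter_Delta_append[of "replicate n a" "[a]" h]
    by (simp add: replicate_append_same[symmetric])
  ultimately have "Delta a (Delta a h) = (\<lambda>_. 0)" by (rule Suc.IH)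
  then show ?case by (rule Delta_eq_0_of_Delta_Delta_eq_0[OF Delta_ptors _ assms(3-6)])
qed

lemma ptors_valued_translation_invariant:
  fixes h :: "'a::ab_group_add \<Rightarrow> 'b::ab_group_add"
  assumes "\<forall>y. h y \<in> ptors p" "diffs_vanish UNIV h m"
    and "a \<in> ptors q" "prime p" "prime q" "p \<noteq> q"
  shows "h (y + a) = h y"
proof -
  have "iter_Delta (replicate m a) h = (\<lambda>_. 0)" using assms(2) unfolding diffs_vanish_def by auto
  then have "Delta a h = (\<lambda>_. 0)" using Delta_eq_0_of_iter_Delta_eq_0 assms by blast
  then have "h (y + a) - h y = 0" unfolding Delta_def by (rule fun_cong)
  then show ?thesis by simp
qed

lemma translation_invariant_sum:
  assumes "finite S" "\<forall>t\<in>S. \<forall>y. h (y + e t) = h y"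
  shows "h (y + sum e S) = h y"
  using assms
proof (induction S arbitrary: y rule: finite_induct)
  case (insert t S)
  then have "h (y + sum e (insert t S)) = h (y + e t + sum e S)" by (simp add: algebra_simps)
  then show ?case using insert by simp
qed simp

lemma pcomp_comp_pcomp_of_diffs_vanish:
  fixes g :: "'a::ab_group_add \<Rightarrow> 'b::ab_group_add"
  assumes TA: "torsion TYPE('a)" and TB: "torsion TYPE('b)"
    and g: "diffs_vanish UNIV g m" and p: "prime p"
  shows "pcomp (g (pcomp x p)) p = pcomp (g x) p"
proof -
  define h where "h y = pcomp (g y) p" for y
  have h_ptors: "\<forall>y. h y \<in> ptors p" unfolding h_def using pcomp_in_ptors[OF TB] by simp
  have h_vanish: "diffs_vanish UNIV h m" using g p diffs_vanish_iff_pcomp[OF TB] unfolding h_def by blast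
  define S where "S = {q. pcomp x q \<noteq> 0} - {p}"
  have S: "finite S" unfolding S_def using finite_pcomp_nonzero[OF TA] by simp
  have "x = sum (pcomp x) (insert p S)"
    using sum_pcomp[OF TA, of "insert p S" x] S unfolding S_def by auto
  moreover have "p \<notin> S" unfolding S_def by simp
  ultimately have "x = pcomp x p + sum (pcomp x) S" using S by simp
  moreover have "\<forall>t\<in>S. \<forall>y. h (y + pcomp x t) = h y"
    using ptors_valued_translation_invariant[OF h_ptors h_vanish pcomp_in_ptors[OF TA] p]
    by (auto simp: S_def) (metis pcomp_nonprime[OF TA])
  ultimately have "h x = h (pcomp x p)" using translation_invariant_sum[OF S] by metis
  then show ?thesis unfolding h_def by simp
qed

lemma glue_pcomp_of_diffs_vanish:
  fixes g :: "'a::ab_group_add \<Rightarrow> 'b::ab_group_add"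
  assumes TA: "torsion TYPE('a)" and TB: "torsion TYPE('b)"
    and finB: "finite {p::nat. prime p \<and> ptors p \<noteq> ({0} :: 'b set)}"
    and g: "diffs_vanish UNIV g m"
  shows "prim_family (\<lambda>p y. pcomp (g y) p) \<and> glue (\<lambda>p y. pcomp (g y) p) = g"
proof
  let ?f = "\<lambda>p y. pcomp (g y) p"
  have "{p. prime p \<and> \<not> (\<forall>x\<in>ptors p. ?f p x = 0)} \<subseteq> {p. prime p \<and> ptors p \<noteq> ({0} :: 'b set)}"
    using pcomp_in_ptors[OF TB] by auto
  then show f: "prim_family ?f"
    unfolding prim_family_def using pcomp_in_ptors[OF TB] finite_subset[OF _ finB] by auto
  show "glue ?f = g"
  proof
    fix x
    have "pcomp (glue ?f x) p = pcomp (g x) p" if "prime p" for p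
      using pcomp_glue[OF TA TB f that] pcomp_comp_pcomp_of_diffs_vanish[OF TA TB g that] by simp
    then show "glue ?f x = g x" using pcomp_eq_iff[OF TB] by blast
  qed
qed

lemma fdeg_class_eq_image_glue:
  fixes P :: "ereal \<Rightarrow> bool"
  assumes TA: "torsion TYPE('a::ab_group_add)" and TB: "torsion TYPE('b::ab_group_add)"
    and finB: "finite {p::nat. prime p \<and> ptors p \<noteq> ({0} :: 'b set)}"
    and P_finite: "\<And>e. P e \<Longrightarrow> e < \<infinity>"
    and P_glue: "\<And>f :: nat \<Rightarrow> 'a \<Rightarrow> 'b. prim_family f \<Longrightarrow>
      P (fdeg (glue f)) \<longleftrightarrow> (\<forall>p. prime p \<longrightarrow> P (fdeg_on (ptors p) (f p)))"
  shows "{g :: 'a \<Rightarrow> 'b. P (fdeg g)}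
    = glue ` {f. prim_family f \<and> (\<forall>p. prime p \<longrightarrow> P (fdeg_on (ptors p) (f p)))}"
proof (intro equalityI subsetI)
  fix g :: "'a \<Rightarrow> 'b" assume "g \<in> {g. P (fdeg g)}"
  then have "P (fdeg g)" by simp
  then obtain m where "diffs_vanish UNIV g m" using P_finite fdeg_on_less_PInfty_iff by blast
  then have f: "prim_family (\<lambda>p y. pcomp (g y) p)" and g: "g = glue (\<lambda>p y. pcomp (g y) p)"
    using glue_pcomp_of_diffs_vanish[OF TA TB finB] by auto
  then have "\<forall>p. prime p \<longrightarrow> P (fdeg_on (ptors p) (\<lambda>y. pcomp (g y) p))"
    using P_glue[OF f] \<open>P (fdeg g)\<close> by simp
  with f g show "g \<in> glue ` {f. prim_family f \<and> (\<forall>p. prime p \<longrightarrow> P (fdeg_on (ptors p) (f p)))}"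
    by blast
next
  fix g :: "'a \<Rightarrow> 'b"
  assume "g \<in> glue ` {f. prim_family f \<and> (\<forall>p. prime p \<longrightarrow> P (fdeg_on (ptors p) (f p)))}"
  then obtain f where "prim_family f" "\<forall>p. prime p \<longrightarrow> P (fdeg_on (ptors p) (f p))" "g = glue f"
    by blast
  then show "g \<in> {g. P (fdeg g)}" using P_glue by simp
qed

theorem corollary3:
  assumes torsA: "\<forall>x::'a::ab_group_add. \<exists>n>0. gmul n x = 0"
    and torsB: "\<forall>y::'b::ab_group_add. \<exists>n>0. gmul n y = 0"
    and finB: "finite {p::nat. prime p \<and> ptors p \<noteq> ({0} :: 'b set)}"
  shows "(\<forall>f :: nat \<Rightarrow> 'a \<Rightarrow> 'b. prim_family f \<longrightarrow>
            fdeg (glue f) = (SUP p\<in>{p. prime p}. fdeg_on (ptors p) (f p)))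
       \<and> (\<forall>n::ereal. (n = -\<infinity> \<or> (\<exists>k::nat. n = ereal (real k))) \<longrightarrow>
            {g :: 'a \<Rightarrow> 'b. fdeg g \<le> n}
              = glue ` {f. prim_family f \<and> (\<forall>p. prime p \<longrightarrow> fdeg_on (ptors p) (f p) \<le> n)})
       \<and> {g :: 'a \<Rightarrow> 'b. fdeg g < \<infinity>}
              = glue ` {f. prim_family f \<and> (\<forall>p. prime p \<longrightarrow> fdeg_on (ptors p) (f p) < \<infinity>)}"
proof -
  have TA: "torsion TYPE('a)" and TB: "torsion TYPE('b)"
    using torsA torsB unfolding torsion_def by blast+
  have "{g :: 'a \<Rightarrow> 'b. fdeg g \<le> n}
      = glue ` {f. prim_family f \<and> (\<forall>p. prime p \<longrightarrow> fdeg_on (ptors p) (f p) \<le> n)}"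
    if "n = -\<infinity> \<or> (\<exists>k::nat. n = ereal (real k))" for n
  proof (rule fdeg_class_eq_image_glue[OF TA TB finB, where P = "\<lambda>e. e \<le> n"])
    show "e < \<infinity>" if "e \<le> n" for e using that \<open>n = -\<infinity> \<or> _\<close> by auto
  qed (rule fdeg_glue_le_iff[OF TA TB])
  moreover have "{g :: 'a \<Rightarrow> 'b. fdeg g < \<infinity>}
      = glue ` {f. prim_family f \<and> (\<forall>p. prime p \<longrightarrow> fdeg_on (ptors p) (f p) < \<infinity>)}"
    by (rule fdeg_class_eq_image_glue[OF TA TB finB, where P = "\<lambda>e. e < \<infinity>"])
      (assumption, rule fdeg_glue_less_PInfty_iff[OF TA TB])
  ultimately show ?thesis using fdeg_glue[OF TA TB] by blast
qed

end
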